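(* Let $n$ be a positive integer. There exists a positive integer $k$ such that the complete graph $K_n$ is a prime $k$th-power distance graph if and only if $n<7$.
   Context: A graph $G$ is a prime $k$th-power distance graph if there is an injective map $L:V(G)\to\mathbb{Z}$ such that for every edge $uv$ of $G$, $|L(u)-L(v)|=p^j$ for some prime $p$ and some positive integer $j\le k$. *)

theory Defs
  imports "HOL-Computational_Algebra.Primes"
begin

definition prime_kth_power_distance_graph ::
  "nat \<Rightarrow> 'a set \<Rightarrow> ('a \<Rightarrow> 'a \<Rightarrow> bool) \<Rightarrow> bool" where
  "prime_kth_power_distance_graph k V E \<longleftrightarrow>
     (\<exists>L :: 'a \<Rightarrow> int. inj_on L V \<and>
        (\<forall>u\<in>V. \<forall>v\<in>V. E u v \<longrightarrow>
           (\<exists>p j. prime (p::nat) \<and> 1 \<le> j \<and> j \<le> k \<and> \<bar>L u - L v\<bar> = int p ^ j)))"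

definition complete_graph_vertices :: "nat \<Rightarrow> nat set" where
  "complete_graph_vertices n = {0..<n}"

definition complete_graph_edge :: "nat \<Rightarrow> nat \<Rightarrow> bool" where
  "complete_graph_edge u v \<longleftrightarrow> u \<noteq> v"

end

theory Submission
  imports Defs
begin

text \<open>Among seven integers, four have the same parity, and their pairwise distances are then
  even prime powers, i.e. powers of 2. If \<open>a < b < c\<close> have all three distances powers of 2,
  the two gaps are equal, since \<open>2^x + 2^y = 2^z\<close> forces \<open>x = y\<close>. Hence four such integers
  would be equally spaced with gap \<open>2^x\<close> and span \<open>3 * 2^x\<close>, which is no power of 2.
  Conversely, the labels 0, 2, 4, 7, 9, 11 realise \<open>K_6\<close>: their distances 2, 3, 4, 5, 7, 9, 11
  are primes or squares of primes.\<close>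

lemma prime_power_even_imp_two:
  fixes p :: nat
  assumes "prime p" "j \<ge> 1" "even (int p ^ j)"
  shows "p = 2"
proof -
  have "(2::nat) dvd p ^ j" using assms(3) by (metis even_of_nat_iff of_nat_power)
  then have "2 dvd p" by (rule prime_dvd_power[OF two_is_prime_nat])
  then show ?thesis using primes_dvd_imp_eq[OF two_is_prime_nat assms(1)] by simp
qed

lemma sum_of_distinct_powers_of_two:
  assumes "x < y"
  shows "(2::int) ^ x + 2 ^ y \<noteq> 2 ^ z"
proof
  assume sum: "(2::int) ^ x + 2 ^ y = 2 ^ z"
  then have "(2::int) ^ y < 2 ^ z" by (smt (verit) zero_less_power)
  then have "Suc y \<le> z" by simp
  then have "(2::int) ^ Suc y \<le> 2 ^ z" by (rule power_increasing) simp
  moreover have "(2::int) ^ x < 2 ^ y" using assms by simp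
  ultimately show False using sum by simp
qed

lemma three_times_power_two_neq_power_two: "3 * (2::int) ^ x \<noteq> 2 ^ w"
proof
  assume "3 * (2::int) ^ x = 2 ^ w"
  then have "int (3 * 2 ^ x) = int (2 ^ w)" by simp
  then have "(3::nat) dvd 2 ^ w" by (metis dvd_triv_left of_nat_eq_iff)
  then have "(3::nat) dvd 2" using prime_dvd_power[of "3::nat" 2 w]
      by (simp add: prime_nat_iff' atLeastLessThan_nat_numeral)
  then show False by simp
qed

lemma card_4_obtain_sorted:
  fixes T :: "'a::linorder set"
  assumes "card T = 4"
  obtains a b c d where "a < b" "b < c" "c < d" "T = {a, b, c, d}"
proof -
  have "\<exists>a b c d. xs = [a, b, c, d]" if "length xs = 4" for xs :: "'a list"
    using that by (auto simp add: numeral_eq_Suc length_Suc_conv)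
  then have "\<exists>a b c d. sorted_list_of_set T = [a, b, c, d]" using assms by simp
  then obtain a b c d where xs: "sorted_list_of_set T = [a, b, c, d]" by blast
  have "finite T" using assms card.infinite by fastforce
  then have "sorted_wrt (<) [a, b, c, d]" "set [a, b, c, d] = T"
    using xs by (metis sorted_list_of_set.strict_sorted_key_list_of_set, metis set_sorted_list_of_set)
  then show ?thesis using that by auto
qed

lemma power_two_sum_eq_power_two_imp_eq:
  assumes "(2::int) ^ x + 2 ^ y = 2 ^ z"
  shows "x = y"
  using assms sum_of_distinct_powers_of_two[of x y z] sum_of_distinct_powers_of_two[of y x z]
  by (metis add.commute linorder_neqE_nat)

lemma no_four_integers_with_power_of_two_distances:
  fixes T :: "int set"
  assumes "card T = 4"
    and "\<forall>x\<in>T. \<forall>y\<in>T. x < y \<longrightarrow> (\<exists>m. y - x = 2 ^ m)"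
  shows False
proof -
  obtain a b c d where "a < b" "b < c" "c < d" and T: "T = {a, b, c, d}"
    using card_4_obtain_sorted[OF assms(1)] .
  moreover have "a \<in> T" "b \<in> T" "c \<in> T" "d \<in> T" using T by auto
  ultimately obtain x y z u v w where
    "b - a = 2 ^ x" "c - b = 2 ^ y" "d - c = 2 ^ z"
    "c - a = 2 ^ u" "d - b = 2 ^ v" "d - a = 2 ^ w"
    using assms(2) by (meson order.strict_trans)
  then have "x = y" "y = z" "3 * (2::int) ^ x = 2 ^ w"
    using power_two_sum_eq_power_two_imp_eq[of x y u] power_two_sum_eq_power_two_imp_eq[of y z v]
    by auto
  then show False using three_times_power_two_neq_power_two by blast
qed

lemma obtain_same_parity_subset:
  fixes S :: "int set"
  assumes "finite S" "2 * m \<le> card S + 1"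
  obtains T where "T \<subseteq> S" "card T = m" "\<forall>x\<in>T. \<forall>y\<in>T. even (y - x)"
proof -
  define E where "E = {x \<in> S. even x}"
  define D where "D = {x \<in> S. odd x}"
  have "S = E \<union> D" "E \<inter> D = {}" by (auto simp: E_def D_def)
  then have "card E + card D = card S"
    using assms(1) card_Un_disjoint[of E D] by simp
  then consider "m \<le> card E" | "m \<le> card D" using assms(2) by linarith
  then show ?thesis
  proof cases
    case 1
    then obtain T where "T \<subseteq> E" "card T = m" by (meson obtain_subset_with_card_n)
    then show ?thesis using that by (auto simp: E_def)
  next
    case 2
    then obtain T where "T \<subseteq> D" "card T = m" by (meson obtain_subset_with_card_n)
    then show ?thesis using that by (auto simp: D_def)
  qed
qed

lemma no_seven_integers_with_prime_power_distances:
  fixes S :: "int set"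
  assumes "7 \<le> card S"
    and "\<forall>x\<in>S. \<forall>y\<in>S. x \<noteq> y \<longrightarrow> (\<exists>(p::nat) j. prime p \<and> 1 \<le> j \<and> \<bar>x - y\<bar> = int p ^ j)"
  shows False
proof -
  have "finite S" using assms(1) card.infinite by fastforce
  moreover have "2 * 4 \<le> card S + 1" using assms(1) by simp
  ultimately obtain T where T: "T \<subseteq> S" "card T = 4" and parity: "\<forall>x\<in>T. \<forall>y\<in>T. even (y - x)"
    by (rule obtain_same_parity_subset)
  have "\<exists>m. y - x = 2 ^ m" if "x \<in> T" "y \<in> T" "x < y" for x y
  proof -
    have "x \<in> S" "y \<in> S" "y \<noteq> x" using T(1) that by auto
    then obtain p j where p: "prime p" "1 \<le> j" and "\<bar>y - x\<bar> = int p ^ j"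
      using assms(2) by meson
    then have dist: "y - x = int p ^ j" using that(3) by simp
    have "even (int p ^ j)" using parity that(1,2) unfolding dist[symmetric] by blast
    then have "p = 2" using prime_power_even_imp_two[OF p] by blast
    then show ?thesis using dist by (intro exI[of _ j]) simp
  qed
  then show False using no_four_integers_with_power_of_two_distances[OF T(2)] by blast
qed

lemma prime_kth_power_distance_graph_subset:
  assumes "prime_kth_power_distance_graph k V E" "W \<subseteq> V"
  shows "prime_kth_power_distance_graph k W E"
  using assms unfolding prime_kth_power_distance_graph_def by (meson inj_on_subset subsetD)

lemma complete_graph_not_prime_kth_power_distance:
  assumes "7 \<le> card V"
  shows "\<not> prime_kth_power_distance_graph k V (\<lambda>u v. u \<noteq> v)"
proof
  assume "prime_kth_power_distance_graph k V (\<lambda>u v. u \<noteq> v)"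
  then obtain L :: "_ \<Rightarrow> int" where inj: "inj_on L V"
    and dist: "\<forall>u\<in>V. \<forall>v\<in>V. u \<noteq> v \<longrightarrow> (\<exists>(p::nat) j. prime p \<and> 1 \<le> j \<and> \<bar>L u - L v\<bar> = int p ^ j)"
    unfolding prime_kth_power_distance_graph_def by blast
  have "7 \<le> card (L ` V)" using assms card_image[OF inj] by simp
  moreover have "\<forall>x\<in>L ` V. \<forall>y\<in>L ` V. x \<noteq> y \<longrightarrow> (\<exists>(p::nat) j. prime p \<and> 1 \<le> j \<and> \<bar>x - y\<bar> = int p ^ j)"
  proof (intro ballI impI)
    fix x y assume "x \<in> L ` V" "y \<in> L ` V" "x \<noteq> y"
    then obtain u v where "u \<in> V" "v \<in> V" "u \<noteq> v" "x = L u" "y = L v" by blast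
    then show "\<exists>(p::nat) j. prime p \<and> 1 \<le> j \<and> \<bar>x - y\<bar> = int p ^ j" using dist by blast
  qed
  ultimately show False by (rule no_seven_integers_with_prime_power_distances)
qed

lemma complete_graph_6_prime_square_distance:
  "prime_kth_power_distance_graph 2 (complete_graph_vertices 6) complete_graph_edge"
proof -
  define L where "L i = [0, 2, 4, 7, 9, 11 :: int] ! i" for i
  have six: "{0..<6::nat} = {0, 1, 2, 3, 4, 5}" by auto
  have inj: "inj_on L {0..<6}" unfolding six by (simp add: L_def)
  have distances: "\<bar>L u - L v\<bar> \<in> int ` {2, 3, 5, 7, 11} \<union> (\<lambda>p. int p ^ 2) ` {2, 3}"
    if "u \<in> {0..<6}" "v \<in> {0..<6}" "u \<noteq> v" for u v
    using that unfolding six by (auto simp: L_def)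
  have prime_or_prime_square: "\<exists>(p::nat) j. prime p \<and> 1 \<le> j \<and> j \<le> 2 \<and> d = int p ^ j"
    if "d \<in> int ` {2, 3, 5, 7, 11} \<union> (\<lambda>p. int p ^ 2) ` {2, 3}" for d
  proof -
    have primes: "prime p" if "p \<in> {2, 3, 5, 7, 11 :: nat}" for p
      using that by (auto simp: prime_nat_iff' atLeastLessThan_nat_numeral)
    from that consider p where "p \<in> {2, 3, 5, 7, 11}" "d = int p"
      | p where "p \<in> {2, 3}" "d = int p ^ 2"
      by blast
    then show ?thesis
    proof cases
      case (1 p)
      then have "prime p \<and> 1 \<le> (1::nat) \<and> (1::nat) \<le> 2 \<and> d = int p ^ 1" using primes by simp
      then show ?thesis by blast
    next
      case (2 p)
      then have "prime p \<and> 1 \<le> (2::nat) \<and> (2::nat) \<le> 2 \<and> d = int p ^ 2" using primes by auto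
      then show ?thesis by blast
    qed
  qed
  show ?thesis
    unfolding prime_kth_power_distance_graph_def complete_graph_vertices_def complete_graph_edge_def
    using inj distances prime_or_prime_square by (intro exI[of _ L]) blast
qed

theorem mainTheorem10:
  fixes n :: nat
  assumes "n \<ge> 1"
  shows "(\<exists>k::nat. k \<ge> 1 \<and>
            prime_kth_power_distance_graph k (complete_graph_vertices n) complete_graph_edge)
         \<longleftrightarrow> n < 7"
proof
  assume "\<exists>k::nat. k \<ge> 1 \<and>
            prime_kth_power_distance_graph k (complete_graph_vertices n) complete_graph_edge"
  then obtain k where "prime_kth_power_distance_graph k {0..<n} (\<lambda>u v. u \<noteq> v)"
    unfolding complete_graph_vertices_def complete_graph_edge_def by blast
  then show "n < 7" using complete_graph_not_prime_kth_power_distance[of "{0..<n}" k] by fastforce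
next
  assume "n < 7"
  then have "complete_graph_vertices n \<subseteq> complete_graph_vertices 6"
    by (auto simp: complete_graph_vertices_def)
  then show "\<exists>k::nat. k \<ge> 1 \<and>
            prime_kth_power_distance_graph k (complete_graph_vertices n) complete_graph_edge"
    using complete_graph_6_prime_square_distance prime_kth_power_distance_graph_subset
    by (intro exI[of _ 2]) auto
qed

end
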